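(* Let $B_J=L+U\in\mathbb R^{n\times n}$ with $L$ strictly lower triangular, $U$ strictly upper triangular, $L\ne O$ and $U^{(j)}_c\ne O$ for all $j=2,\dots,n$. Then the iteration matrix $T(\mathcal B_{FUTC})$ of the splitting $\mathcal B_{FUTC}=(U^{(n)}_c,U^{(n-1)}_c,\dots,U^{(2)}_c,L)$ and the backward Gauss–Seidel iteration matrix $B_{bGS}=(I-U)^{-1}L$ have the same nonzero eigenvalues.
   Context: For $j\in\{2,\dots,n\}$, $U^{(j)}_c$ is the $n\times n$ matrix whose $j$-th column agrees with the $j$-th column of $U$ in rows $i\le j-1$ and which is zero elsewhere (the $j$-th column of $U$). For $B\in\mathbb R^{n\times n}$, a splitting of $B$ of order $d\ge1$ is an ordered $d$-tuple $\mathcal B=(B_1,\dots,B_d)$ of real $n\times n$ matrices with $B_p\neq O$ for all $p$, $\sum_{p=1}^d B_p=B$, and $B_p\circ B_q=O$ (Hadamard product) for $p\ne q$. The iteration matrix of $\mathcal B$ is the $dn\times dn$ matrix $T(\mathcal B)=(I_{dn}-\mathcal L)^{-1}\mathcal U$, where $\mathcal L,\mathcal U$ are $d\times d$ block matrices with $n\times n$ blocks, $\mathcal L_{ij}=B_j$ if $i>j$ and $O$ otherwise, $\mathcal U_{ij}=B_j$ if $i\le j$ and $O$ otherwise. *)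

theory Defs
  imports "Jordan_Normal_Form.Char_Poly"
begin

text \<open>Matrices are Jordan_Normal_Form matrices (type 'a mat with explicit dimensions).
  Indices are 0-based; the paper's index j in 1..n corresponds to j-1 here.\<close>

definition mat_inv :: "'a :: field mat \<Rightarrow> 'a mat" where
  "mat_inv A = (SOME B. B \<in> carrier_mat (dim_row A) (dim_row A) \<and>
                        A * B = 1\<^sub>m (dim_row A) \<and> B * A = 1\<^sub>m (dim_row A))"

definition strictly_lower :: "nat \<Rightarrow> 'a :: zero mat \<Rightarrow> bool" where
  "strictly_lower n A \<longleftrightarrow> A \<in> carrier_mat n n \<and> (\<forall>i<n. \<forall>j<n. i \<le> j \<longrightarrow> A $$ (i,j) = 0)"

definition strictly_upper :: "nat \<Rightarrow> 'a :: zero mat \<Rightarrow> bool" where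
  "strictly_upper n A \<longleftrightarrow> A \<in> carrier_mat n n \<and> (\<forall>i<n. \<forall>j<n. j \<le> i \<longrightarrow> A $$ (i,j) = 0)"

text \<open>U_c^(j) (paper's 1-based j): keep column j of U in rows 1..j-1, zero elsewhere.\<close>
definition col_part :: "nat \<Rightarrow> 'a :: zero mat \<Rightarrow> nat \<Rightarrow> 'a mat" where
  "col_part n U j = mat n n (\<lambda>(i,k). if k = j - 1 \<and> i < j - 1 then U $$ (i,k) else 0)"

definition is_splitting :: "nat \<Rightarrow> 'a :: ring mat \<Rightarrow> 'a mat list \<Rightarrow> bool" where
  "is_splitting n B Bs \<longleftrightarrow> length Bs \<ge> 1 \<and>
     (\<forall>p<length Bs. Bs ! p \<in> carrier_mat n n \<and> Bs ! p \<noteq> 0\<^sub>m n n) \<and>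
     foldr (+) Bs (0\<^sub>m n n) = B \<and>
     (\<forall>p<length Bs. \<forall>q<length Bs. p \<noteq> q \<longrightarrow>
        (\<forall>i<n. \<forall>j<n. Bs ! p $$ (i,j) * Bs ! q $$ (i,j) = 0))"

definition block_mat :: "nat \<Rightarrow> nat \<Rightarrow> (nat \<Rightarrow> nat \<Rightarrow> 'a mat) \<Rightarrow> 'a mat" where
  "block_mat d n F = mat (d*n) (d*n) (\<lambda>(i,j). F (i div n) (j div n) $$ (i mod n, j mod n))"

definition calL :: "nat \<Rightarrow> 'a :: zero mat list \<Rightarrow> 'a mat" where
  "calL n Bs = block_mat (length Bs) n (\<lambda>i j. if i > j then Bs ! j else 0\<^sub>m n n)"

definition calU :: "nat \<Rightarrow> 'a :: zero mat list \<Rightarrow> 'a mat" where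
  "calU n Bs = block_mat (length Bs) n (\<lambda>i j. if i \<le> j then Bs ! j else 0\<^sub>m n n)"

definition iter_mat :: "nat \<Rightarrow> 'a :: field mat list \<Rightarrow> 'a mat" where
  "iter_mat n Bs = mat_inv (1\<^sub>m (length Bs * n) - calL n Bs) * calU n Bs"

definition futc_splitting :: "nat \<Rightarrow> 'a :: zero mat \<Rightarrow> 'a mat \<Rightarrow> 'a mat list" where
  "futc_splitting n L U = map (\<lambda>k. col_part n U (n - k)) [0..<n-1] @ [L]"

definition bGS :: "nat \<Rightarrow> 'a :: field mat \<Rightarrow> 'a mat \<Rightarrow> 'a mat" where
  "bGS n L U = mat_inv (1\<^sub>m n - U) * L"

end

theory Submission
  imports Defs
begin

(* For mu \<noteq> 0, mu is an eigenvalue of T = (I - calL)\<inverse> calU iff calU v = mu (I - calL) v has a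
   nonzero solution v = (y_0, ..., y_{n-1}), and of B_bGS iff L w = mu (I - U) w has one.
   With z_q = B_q y_q the block rows of the first system telescope to
   z_0 + ... + z_{n-1} = mu y_0 together with mu (y_{p+1} - y_p) = (mu - 1) z_p.
   For B_FUTC, z_p (p < n - 1) is column n - 1 - p of U times entry n - 1 - p of y_p, and this
   entry is not changed by the later steps of the recursion, because the columns added there
   vanish in that row. Hence the recursion can be solved downwards from t = y_{n-1}:
   mu y_p = mu t - (mu - 1) (sum of U_{.k} t_k over k < n - p). The remaining equation
   z_0 + ... + z_{n-1} = mu y_0 then says exactly L t = mu (I - U) t, and v = 0 iff t = 0.
   The argument works over every field; the real statement follows because complexification
   commutes with all the constructions. *)

lemma mat_inv_eqI:
  fixes A B :: "'a::field mat"
  assumes A: "A \<in> carrier_mat m m" and B: "B \<in> carrier_mat m m"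
    and AB: "A * B = 1\<^sub>m m" and BA: "B * A = 1\<^sub>m m"
  shows "mat_inv A = B"
proof -
  have "\<exists>C. C \<in> carrier_mat (dim_row A) (dim_row A) \<and> A * C = 1\<^sub>m (dim_row A) \<and> C * A = 1\<^sub>m (dim_row A)"
    using A B AB BA by auto
  from someI_ex[OF this] have C: "mat_inv A \<in> carrier_mat m m" "A * mat_inv A = 1\<^sub>m m"
    unfolding mat_inv_def using A by auto
  have "mat_inv A = (B * A) * mat_inv A" using C BA by simp
  also have "\<dots> = B * (A * mat_inv A)" using A B C by (simp add: assoc_mult_mat)
  finally show ?thesis using B C by simp
qed

lemma mat_inv_inverse:
  fixes A :: "'a::field mat"
  assumes A: "A \<in> carrier_mat m m" and det: "det A \<noteq> 0"
  shows "mat_inv A \<in> carrier_mat m m" "A * mat_inv A = 1\<^sub>m m" "mat_inv A * A = 1\<^sub>m m"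
proof -
  obtain B where B: "B \<in> carrier_mat m m" "A * B = 1\<^sub>m m" "B * A = 1\<^sub>m m"
    using det_non_zero_imp_unit[OF A det, of "()"] unfolding Units_def ring_mat_def by auto
  with A have "mat_inv A = B" by (intro mat_inv_eqI)
  with B show "mat_inv A \<in> carrier_mat m m" "A * mat_inv A = 1\<^sub>m m" "mat_inv A * A = 1\<^sub>m m"
    by simp_all
qed

lemma eigenvalue_mat_inv_mult_iff:
  fixes A B :: "'a::field mat"
  assumes A: "A \<in> carrier_mat m m" and det: "det A \<noteq> 0" and B: "B \<in> carrier_mat m m"
  shows "eigenvalue (mat_inv A * B) mu \<longleftrightarrow>
    (\<exists>v \<in> carrier_vec m. v \<noteq> 0\<^sub>v m \<and> B *\<^sub>v v = mu \<cdot>\<^sub>v (A *\<^sub>v v))"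
proof -
  note Ai = mat_inv_inverse[OF A det]
  have cancel: "M *\<^sub>v (N *\<^sub>v w) = w"
    if "M \<in> carrier_mat m m" "N \<in> carrier_mat m m" "M * N = 1\<^sub>m m" "w \<in> carrier_vec m"
    for M N :: "'a mat" and w
    using that assoc_mult_mat_vec[of M m m N m w] one_mult_mat_vec[of w m] by metis
  have "(mat_inv A * B) *\<^sub>v v = mu \<cdot>\<^sub>v v \<longleftrightarrow> B *\<^sub>v v = mu \<cdot>\<^sub>v (A *\<^sub>v v)"
    if v: "v \<in> carrier_vec m" for v
  proof
    assume "(mat_inv A * B) *\<^sub>v v = mu \<cdot>\<^sub>v v"
    then have "A *\<^sub>v (mat_inv A *\<^sub>v (B *\<^sub>v v)) = A *\<^sub>v (mu \<cdot>\<^sub>v v)"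
      using Ai B v by simp
    then show "B *\<^sub>v v = mu \<cdot>\<^sub>v (A *\<^sub>v v)"
      using A Ai B v cancel by (simp add: mult_mat_vec)
  next
    assume "B *\<^sub>v v = mu \<cdot>\<^sub>v (A *\<^sub>v v)"
    then have "(mat_inv A * B) *\<^sub>v v = mat_inv A *\<^sub>v (mu \<cdot>\<^sub>v (A *\<^sub>v v))"
      using Ai B v by simp
    then show "(mat_inv A * B) *\<^sub>v v = mu \<cdot>\<^sub>v v"
      using A Ai v cancel by (simp add: mult_mat_vec)
  qed
  moreover have "dim_row (mat_inv A * B) = m" using Ai by simp
  ultimately show ?thesis
    unfolding eigenvalue_def eigenvector_def by (metis (no_types, lifting))
qed

lemma det_one_minus_strictly_lower:
  fixes M :: "'a::comm_ring_1 mat"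
  assumes "strictly_lower n M"
  shows "det (1\<^sub>m n - M) = 1"
proof -
  have M: "M \<in> carrier_mat n n" and zero: "\<And>i j. i < n \<Longrightarrow> j < n \<Longrightarrow> i \<le> j \<Longrightarrow> M $$ (i,j) = 0"
    using assms unfolding strictly_lower_def by auto
  have "det (1\<^sub>m n - M) = prod_list (diag_mat (1\<^sub>m n - M))"
    by (rule det_lower_triangular[where n=n]) (use M zero in auto)
  also have "\<dots> = (\<Prod>i = 0..<n. (1\<^sub>m n - M) $$ (i,i))"
    using M by (simp add: prod_list_diag_prod)
  also have "\<dots> = 1"
    by (rule prod.neutral) (use M zero in auto)
  finally show ?thesis .
qed

lemma det_one_minus_strictly_upper:
  fixes M :: "'a::comm_ring_1 mat"
  assumes "strictly_upper n M"
  shows "det (1\<^sub>m n - M) = 1"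
proof -
  have M: "M \<in> carrier_mat n n" and zero: "\<And>i j. i < n \<Longrightarrow> j < n \<Longrightarrow> j \<le> i \<Longrightarrow> M $$ (i,j) = 0"
    using assms unfolding strictly_upper_def by auto
  have "det (1\<^sub>m n - M) = prod_list (diag_mat (1\<^sub>m n - M))"
    by (rule det_upper_triangular[where n=n]) (use M zero in \<open>auto simp: upper_triangular_def\<close>)
  also have "\<dots> = (\<Prod>i = 0..<n. (1\<^sub>m n - M) $$ (i,i))"
    using M by (simp add: prod_list_diag_prod)
  also have "\<dots> = 1"
    by (rule prod.neutral) (use M zero in auto)
  finally show ?thesis .
qed

lemma block_index_less:
  fixes q b d n :: nat
  assumes "q < d" and "b < n"
  shows "q * n + b < d * n"
proof -
  have "q * n + b < Suc q * n" using assms(2) by simp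
  also have "\<dots> \<le> d * n" using assms(1) by (intro mult_le_mono1) simp
  finally show ?thesis .
qed

lemma block_index_div_mod:
  fixes i d n :: nat
  assumes "i < d * n"
  shows "i div n < d" and "i mod n < n"
proof -
  have "0 < n" using assms by (cases n) auto
  then show "i div n < d" and "i mod n < n"
    using assms by (simp_all add: less_mult_imp_div_less)
qed

lemma sum_lessThan_mult_split:
  fixes f :: "nat \<Rightarrow> 'a::comm_monoid_add"
  shows "(\<Sum>j<d * n. f j) = (\<Sum>q<d. \<Sum>b<n. f (q * n + b))"
proof -
  have "(\<Sum>j<d * n. f j) = (\<Sum>q<d. sum f {q * n..<q * n + n})"
    by (rule sum.nat_group[symmetric])
  also have "\<dots> = (\<Sum>q<d. \<Sum>b<n. f (q * n + b))"
  proof (rule sum.cong[OF refl])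
    fix q
    show "sum f {q * n..<q * n + n} = (\<Sum>b<n. f (q * n + b))"
      by (rule sum.reindex_bij_witness[where i="\<lambda>b. q * n + b" and j="\<lambda>j. j - q * n"]) auto
  qed
  finally show ?thesis .
qed

lemma block_vec_eq_iff:
  assumes "v \<in> carrier_vec (d * n)" and "w \<in> carrier_vec (d * n)"
  shows "v = w \<longleftrightarrow> (\<forall>p<d. \<forall>a<n. v $ (p * n + a) = w $ (p * n + a))"
proof
  assume entries: "\<forall>p<d. \<forall>a<n. v $ (p * n + a) = w $ (p * n + a)"
  show "v = w"
  proof (rule eq_vecI)
    fix i assume "i < dim_vec w"
    then have "i < d * n" using assms by simp
    then have "i div n < d" and "i mod n < n" by (rule block_index_div_mod)+
    then show "v $ i = w $ i" using entries by (metis div_mult_mod_eq)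
  qed (use assms in simp)
qed simp

lemma block_mat_mult_vec_index:
  fixes F :: "nat \<Rightarrow> nat \<Rightarrow> 'a::semiring_0 mat"
  assumes v: "v \<in> carrier_vec (d * n)" and p: "p < d" and a: "a < n"
  shows "(block_mat d n F *\<^sub>v v) $ (p * n + a) = (\<Sum>q<d. \<Sum>b<n. F p q $$ (a, b) * v $ (q * n + b))"
proof -
  have pa: "p * n + a < d * n" using block_index_less[OF p a] .
  have "(block_mat d n F *\<^sub>v v) $ (p * n + a) = (\<Sum>j<d * n. block_mat d n F $$ (p * n + a, j) * v $ j)"
    using v pa by (simp add: block_mat_def scalar_prod_def atLeast0LessThan)
  also have "\<dots> = (\<Sum>q<d. \<Sum>b<n. F p q $$ (a, b) * v $ (q * n + b))"
    unfolding sum_lessThan_mult_split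
    by (intro sum.cong refl) (use p a block_index_less in \<open>auto simp: block_mat_def\<close>)
  finally show ?thesis .
qed

lemma strictly_lower_calL: "strictly_lower (length Bs * n) (calL n Bs)"
proof -
  have "\<not> j div n < i div n" if "i \<le> j" for i j :: nat
    using that by (simp add: div_le_mono leD)
  moreover have "j mod n < n" if "j < length Bs * n" for j
    using that by (rule block_index_div_mod)
  ultimately show ?thesis
    unfolding strictly_lower_def calL_def block_mat_def by auto
qed

lemma sum_lessThan_if_less:
  fixes p d :: nat
  assumes "p \<le> d"
  shows "(\<Sum>q<d. if q < p then f q else 0) = (\<Sum>q<p. f q)"
proof -
  have "{q \<in> {..<d}. q < p} = {..<p}" using assms by auto
  then show ?thesis by (simp flip: sum.inter_filter)
qed

lemma telescoping_system_iff:
  fixes y z :: "nat \<Rightarrow> 'a::comm_ring_1"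
  assumes "0 < d"
  shows "(\<forall>p<d. (\<Sum>q<d. z q) + (mu - 1) * (\<Sum>q<p. z q) = mu * y p) \<longleftrightarrow>
    (\<Sum>q<d. z q) = mu * y 0 \<and> (\<forall>p. Suc p < d \<longrightarrow> mu * (y (Suc p) - y p) = (mu - 1) * z p)"
proof (intro iffI conjI allI impI)
  assume eq: "\<forall>p<d. (\<Sum>q<d. z q) + (mu - 1) * (\<Sum>q<p. z q) = mu * y p"
  show "(\<Sum>q<d. z q) = mu * y 0" using eq assms by auto
  fix p assume "Suc p < d"
  then show "mu * (y (Suc p) - y p) = (mu - 1) * z p"
    using eq[rule_format, of p] eq[rule_format, of "Suc p"] by (simp add: algebra_simps)
next
  assume eq: "(\<Sum>q<d. z q) = mu * y 0 \<and> (\<forall>p. Suc p < d \<longrightarrow> mu * (y (Suc p) - y p) = (mu - 1) * z p)"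
  fix p assume "p < d"
  then show "(\<Sum>q<d. z q) + (mu - 1) * (\<Sum>q<p. z q) = mu * y p"
  proof (induction p)
    case (Suc p)
    have "(\<Sum>q<d. z q) + (mu - 1) * (\<Sum>q<Suc p. z q)
        = ((\<Sum>q<d. z q) + (mu - 1) * (\<Sum>q<p. z q)) + (mu - 1) * z p"
      by (simp add: algebra_simps)
    also have "\<dots> = mu * y p + mu * (y (Suc p) - y p)"
      using Suc eq by simp
    finally show ?case by (simp add: algebra_simps)
  qed (use eq in simp)
qed

(* With y_q the q-th block of v, block row p of calU v = mu (I - calL) v reads
   (sum over q \<ge> p of B_q y_q) = mu (y_p - sum over q < p of B_q y_q). *)
lemma iter_mat_eigen_equation_iff:
  fixes Bs :: "'a::comm_ring_1 mat list"
  assumes v: "v \<in> carrier_vec (length Bs * n)"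
  defines "z \<equiv> \<lambda>q a. \<Sum>b<n. Bs ! q $$ (a, b) * v $ (q * n + b)"
  shows "calU n Bs *\<^sub>v v = mu \<cdot>\<^sub>v ((1\<^sub>m (length Bs * n) - calL n Bs) *\<^sub>v v) \<longleftrightarrow>
    (\<forall>p<length Bs. \<forall>a<n. (\<Sum>q<length Bs. z q a) + (mu - 1) * (\<Sum>q<p. z q a) = mu * v $ (p * n + a))"
proof -
  define d where "d = length Bs"
  have CL: "calL n Bs \<in> carrier_mat (d * n) (d * n)" and CU: "calU n Bs \<in> carrier_mat (d * n) (d * n)"
    unfolding calL_def calU_def block_mat_def d_def by auto
  have v': "v \<in> carrier_vec (d * n)" using v by (simp add: d_def)
  have zero_block: "(\<Sum>b<n. 0\<^sub>m n n $$ (a, b) * v $ (q * n + b)) = 0" if "a < n" for a q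
    using that by (intro sum.neutral) auto
  have U_ent: "(calU n Bs *\<^sub>v v) $ (p * n + a) = (\<Sum>q<d. z q a) - (\<Sum>q<p. z q a)"
    if p: "p < d" and a: "a < n" for p a
  proof -
    have "(calU n Bs *\<^sub>v v) $ (p * n + a) = (\<Sum>q<d. if p \<le> q then z q a else 0)"
      unfolding calU_def d_def[symmetric] block_mat_mult_vec_index[OF v' p a]
      by (intro sum.cong refl) (use a zero_block in \<open>auto simp: z_def\<close>)
    also have "\<dots> = (\<Sum>q<d. z q a) - (\<Sum>q<d. if q < p then z q a else 0)"
      unfolding sum_subtractf[symmetric] by (intro sum.cong) auto
    finally show ?thesis using p by (simp add: sum_lessThan_if_less)
  qed
  have L_ent: "(calL n Bs *\<^sub>v v) $ (p * n + a) = (\<Sum>q<p. z q a)"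
    if p: "p < d" and a: "a < n" for p a
  proof -
    have "(calL n Bs *\<^sub>v v) $ (p * n + a) = (\<Sum>q<d. if q < p then z q a else 0)"
      unfolding calL_def d_def[symmetric] block_mat_mult_vec_index[OF v' p a]
      by (intro sum.cong refl) (use a zero_block in \<open>auto simp: z_def\<close>)
    then show ?thesis using p by (simp add: sum_lessThan_if_less)
  qed
  have "(1\<^sub>m (d * n) - calL n Bs) *\<^sub>v v = v - calL n Bs *\<^sub>v v"
    using minus_mult_distrib_mat_vec[OF one_carrier_mat CL v'] v' by simp
  then have rhs_ent: "(mu \<cdot>\<^sub>v ((1\<^sub>m (d * n) - calL n Bs) *\<^sub>v v)) $ (p * n + a)
      = mu * (v $ (p * n + a) - (\<Sum>q<p. z q a))" if "p < d" "a < n" for p a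
    using that CL v' block_index_less[OF that] L_ent[OF that] by simp
  have A: "1\<^sub>m (d * n) - calL n Bs \<in> carrier_mat (d * n) (d * n)" using CL by (rule minus_carrier_mat)
  have "calU n Bs *\<^sub>v v = mu \<cdot>\<^sub>v ((1\<^sub>m (d * n) - calL n Bs) *\<^sub>v v) \<longleftrightarrow>
      (\<forall>p<d. \<forall>a<n. (\<Sum>q<d. z q a) - (\<Sum>q<p. z q a) = mu * (v $ (p * n + a) - (\<Sum>q<p. z q a)))"
    using CU A v' by (subst block_vec_eq_iff[where d=d and n=n]) (auto simp: U_ent rhs_ent)
  also have "\<dots> \<longleftrightarrow> (\<forall>p<d. \<forall>a<n. (\<Sum>q<d. z q a) + (mu - 1) * (\<Sum>q<p. z q a) = mu * v $ (p * n + a))"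
    by (simp add: algebra_simps)
  finally show ?thesis unfolding d_def .
qed

lemma length_futc_splitting: "0 < n \<Longrightarrow> length (futc_splitting n L U) = n"
  unfolding futc_splitting_def by simp

lemma futc_splitting_carrier:
  "L \<in> carrier_mat n n \<Longrightarrow> \<forall>B \<in> set (futc_splitting n L U). B \<in> carrier_mat n n"
  unfolding futc_splitting_def col_part_def by auto

lemma strictly_upper_row_prefix_sum:
  fixes U :: "'a::semiring_0 mat"
  assumes "strictly_upper n U" and "a < n" and "m \<le> Suc a"
  shows "(\<Sum>k<m. U $$ (a, k) * f k) = 0"
  using assms unfolding strictly_upper_def by (intro sum.neutral) auto

(* Block q < n - 1 of B_FUTC is the (0-based) column n - 1 - q of U; the row cut-off in col_part
   is invisible because U is strictly upper triangular. *)
lemma futc_splitting_nth_mult_sum: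
  fixes L U :: "'a::semiring_0 mat"
  assumes U: "strictly_upper n U" and q: "q < n" and a: "a < n"
  shows "(\<Sum>b<n. futc_splitting n L U ! q $$ (a, b) * f b) =
    (if q < n - 1 then U $$ (a, n - 1 - q) * f (n - 1 - q) else \<Sum>b<n. L $$ (a, b) * f b)"
proof (cases "q < n - 1")
  case True
  then have "futc_splitting n L U ! q = col_part n U (n - q)"
    unfolding futc_splitting_def by (simp add: nth_append)
  then have "(\<Sum>b<n. futc_splitting n L U ! q $$ (a, b) * f b)
      = (\<Sum>b<n. if b = n - 1 - q then U $$ (a, b) * f b else 0)"
    using True a U unfolding col_part_def strictly_upper_def by (intro sum.cong) auto
  also have "\<dots> = U $$ (a, n - 1 - q) * f (n - 1 - q)"
    using True by simp
  finally show ?thesis using True by simp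
next
  case False
  then have "futc_splitting n L U ! q = L"
    using q unfolding futc_splitting_def by (simp add: nth_append)
  then show ?thesis using False by simp
qed

lemma futc_recursion_imp_closed_form:
  fixes U :: "'a::field mat" and y :: "nat \<Rightarrow> nat \<Rightarrow> 'a"
  assumes U: "strictly_upper n U" and mu: "mu \<noteq> 0"
    and recursion: "\<And>p a. Suc p < n \<Longrightarrow> a < n \<Longrightarrow>
      mu * (y (Suc p) a - y p a) = (mu - 1) * (U $$ (a, n - 1 - p) * y p (n - 1 - p))"
    and p: "p < n" and a: "a < n"
  shows "mu * y p a = mu * y (n - 1) a - (mu - 1) * (\<Sum>k<n - p. U $$ (a, k) * y (n - 1) k)"
proof -
  define t where "t = y (n - 1)"
  have "\<forall>a<n. mu * y (n - 1 - j) a = mu * t a - (mu - 1) * (\<Sum>k<Suc j. U $$ (a, k) * t k)"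
    if "j < n" for j
    using that
  proof (induction j)
    case 0
    show ?case using U unfolding strictly_upper_def by (simp add: t_def)
  next
    case (Suc j)
    define p where "p = n - 1 - Suc j"
    have p: "Suc p = n - 1 - j" "n - 1 - p = Suc j" "Suc p < n"
      using Suc.prems by (auto simp: p_def)
    have IH: "\<forall>a<n. mu * y (Suc p) a = mu * t a - (mu - 1) * (\<Sum>k<Suc j. U $$ (a, k) * t k)"
      using Suc p by simp
    have "U $$ (Suc j, Suc j) = 0" using U Suc.prems unfolding strictly_upper_def by simp
    then have "mu * y p (Suc j) = mu * y (Suc p) (Suc j)"
      using recursion[OF p(3) Suc.prems] p(2) by (auto simp: algebra_simps)
    also have "\<dots> = mu * t (Suc j)"
      using IH Suc.prems strictly_upper_row_prefix_sum[OF U, of "Suc j" "Suc j"] by simp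
    finally have diagonal: "y p (Suc j) = t (Suc j)" using mu by simp
    show ?case
    proof (intro allI impI)
      fix a assume a: "a < n"
      have "mu * y p a = mu * y (Suc p) a - (mu - 1) * (U $$ (a, Suc j) * t (Suc j))"
        using recursion[OF p(3) a] p(2) diagonal by (simp add: algebra_simps)
      also have "\<dots> = mu * t a - (mu - 1) * (\<Sum>k<Suc (Suc j). U $$ (a, k) * t k)"
        using IH a by (simp add: algebra_simps)
      finally show "mu * y (n - 1 - Suc j) a = mu * t a - (mu - 1) * (\<Sum>k<Suc (Suc j). U $$ (a, k) * t k)"
        unfolding p_def .
    qed
  qed
  moreover have "n - 1 - p < n" using p by auto
  ultimately have "mu * y (n - 1 - (n - 1 - p)) a
      = mu * t a - (mu - 1) * (\<Sum>k<Suc (n - 1 - p). U $$ (a, k) * t k)"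
    using a by blast
  moreover have "n - 1 - (n - 1 - p) = p" and "Suc (n - 1 - p) = n - p"
    using p by auto
  ultimately show ?thesis unfolding t_def by (simp only:)
qed

lemma futc_closed_form_imp_recursion:
  fixes U :: "'a::field mat" and y :: "nat \<Rightarrow> nat \<Rightarrow> 'a"
  assumes U: "strictly_upper n U" and mu: "mu \<noteq> 0"
    and closed: "\<forall>p<n. \<forall>a<n. mu * y p a = mu * y (n - 1) a - (mu - 1) * (\<Sum>k<n - p. U $$ (a, k) * y (n - 1) k)"
    and p: "Suc p < n" and a: "a < n"
  shows "mu * (y (Suc p) a - y p a) = (mu - 1) * (U $$ (a, n - 1 - p) * y p (n - 1 - p))"
proof -
  define t where "t = y (n - 1)"
  from closed have closed: "\<forall>p<n. \<forall>a<n. mu * y p a = mu * t a - (mu - 1) * (\<Sum>k<n - p. U $$ (a, k) * t k)"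
    unfolding t_def .
  define k where "k = n - 1 - p"
  have k: "n - p = Suc k" "n - Suc p = k" "k < n" using p by (auto simp: k_def)
  have "mu * y p k = mu * t k"
    using closed[rule_format, of p k] p k strictly_upper_row_prefix_sum[OF U, of k "Suc k"] by simp
  then have diagonal: "y p k = t k" using mu by simp
  have "mu * y p a = mu * t a - (mu - 1) * (\<Sum>i<Suc k. U $$ (a, i) * t i)"
    using closed p a k(1) by simp
  moreover have "mu * y (Suc p) a = mu * t a - (mu - 1) * (\<Sum>i<k. U $$ (a, i) * t i)"
    using closed p a k(2) by simp
  ultimately have "mu * (y (Suc p) a - y p a)
      = (mu * t a - (mu - 1) * (\<Sum>i<k. U $$ (a, i) * t i))
        - (mu * t a - (mu - 1) * (\<Sum>i<Suc k. U $$ (a, i) * t i))"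
    by (simp only: right_diff_distrib)
  also have "\<dots> = (mu - 1) * (U $$ (a, k) * t k)"
    by (simp add: algebra_simps)
  finally show ?thesis
    using diagonal by (simp add: k_def)
qed

lemma futc_closed_form_diagonal:
  fixes U :: "'a::field mat" and y :: "nat \<Rightarrow> nat \<Rightarrow> 'a"
  assumes U: "strictly_upper n U" and mu: "mu \<noteq> 0"
    and closed: "\<forall>p<n. \<forall>a<n. mu * y p a = mu * y (n - 1) a - (mu - 1) * (\<Sum>k<n - p. U $$ (a, k) * y (n - 1) k)"
    and q: "q < n"
  shows "y q (n - 1 - q) = y (n - 1) (n - 1 - q)"
proof -
  have k: "n - 1 - q < n" using q by auto
  have "(\<Sum>k<n - q. U $$ (n - 1 - q, k) * y (n - 1) k) = 0"
    using strictly_upper_row_prefix_sum[OF U k] q by simp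
  then have "mu * y q (n - 1 - q) = mu * y (n - 1) (n - 1 - q)"
    using closed[rule_format, OF q k] by simp
  then show ?thesis using mu by simp
qed

lemma futc_block_sum:
  fixes L U :: "'a::comm_semiring_1 mat" and y :: "nat \<Rightarrow> nat \<Rightarrow> 'a"
  assumes U: "strictly_upper n U" and n: "0 < n" and a: "a < n"
    and diagonal: "\<And>q. q < n \<Longrightarrow> y q (n - 1 - q) = y (n - 1) (n - 1 - q)"
  shows "(\<Sum>q<n. \<Sum>b<n. futc_splitting n L U ! q $$ (a, b) * y q b)
    = (\<Sum>k<n. U $$ (a, k) * y (n - 1) k) + (\<Sum>b<n. L $$ (a, b) * y (n - 1) b)"
proof -
  obtain m where m: "n = Suc m" using n by (cases n) auto
  define g where "g k = U $$ (a, k) * y m k" for k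
  have "(\<Sum>q<n. \<Sum>b<n. futc_splitting n L U ! q $$ (a, b) * y q b)
      = (\<Sum>q<Suc m. if q < m then g (m - q) else \<Sum>b<n. L $$ (a, b) * y m b)"
    unfolding m[symmetric]
  proof (rule sum.cong[OF refl])
    fix q assume "q \<in> {..<n}"
    then have q: "q < n" by simp
    show "(\<Sum>b<n. futc_splitting n L U ! q $$ (a, b) * y q b)
        = (if q < m then g (m - q) else \<Sum>b<n. L $$ (a, b) * y m b)"
      using q futc_splitting_nth_mult_sum[OF U q a] diagonal[OF q] unfolding g_def m
      by (cases "q < m") (auto simp: less_Suc_eq simp del: sum.lessThan_Suc)
  qed
  also have "\<dots> = (\<Sum>q<m. g (m - q)) + (\<Sum>b<n. L $$ (a, b) * y m b)"
    by simp
  also have "(\<Sum>q<m. g (m - q)) = (\<Sum>q<n. g (n - Suc q))"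
    using U a by (simp add: m g_def strictly_upper_def)
  also have "\<dots> = (\<Sum>k<n. g k)"
    by (rule sum.nat_diff_reindex)
  finally show ?thesis by (simp add: m g_def)
qed

lemma futc_first_block_row_iff:
  fixes L U :: "'a::field mat" and y :: "nat \<Rightarrow> nat \<Rightarrow> 'a"
  assumes U: "strictly_upper n U" and n: "0 < n" and mu: "mu \<noteq> 0" and a: "a < n"
    and closed: "\<forall>p<n. \<forall>a<n. mu * y p a = mu * y (n - 1) a - (mu - 1) * (\<Sum>k<n - p. U $$ (a, k) * y (n - 1) k)"
  shows "(\<Sum>q<n. \<Sum>b<n. futc_splitting n L U ! q $$ (a, b) * y q b) = mu * y 0 a \<longleftrightarrow>
    (\<Sum>b<n. L $$ (a, b) * y (n - 1) b) = mu * (y (n - 1) a - (\<Sum>b<n. U $$ (a, b) * y (n - 1) b))"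
proof -
  define t where "t = y (n - 1)"
  have "(\<Sum>q<n. \<Sum>b<n. futc_splitting n L U ! q $$ (a, b) * y q b)
      = (\<Sum>k<n. U $$ (a, k) * t k) + (\<Sum>b<n. L $$ (a, b) * t b)"
    unfolding t_def by (rule futc_block_sum[where y=y, OF U n a futc_closed_form_diagonal[OF U mu closed]])
  moreover have "mu * y 0 a = mu * t a - (mu - 1) * (\<Sum>k<n. U $$ (a, k) * t k)"
    using closed[rule_format, OF n a] by (simp add: t_def)
  ultimately have "(\<Sum>q<n. \<Sum>b<n. futc_splitting n L U ! q $$ (a, b) * y q b) = mu * y 0 a \<longleftrightarrow>
      (\<Sum>k<n. U $$ (a, k) * t k) + (\<Sum>b<n. L $$ (a, b) * t b)
      = mu * t a - (mu - 1) * (\<Sum>k<n. U $$ (a, k) * t k)"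
    by (simp only:)
  then show ?thesis unfolding t_def by (auto simp: algebra_simps)
qed

lemma futc_eigen_system_iff:
  fixes L U :: "'a::field mat" and y :: "nat \<Rightarrow> nat \<Rightarrow> 'a"
  assumes U: "strictly_upper n U" and n: "0 < n" and mu: "mu \<noteq> 0"
  defines "z \<equiv> \<lambda>q a. \<Sum>b<n. futc_splitting n L U ! q $$ (a, b) * y q b"
    and "t \<equiv> y (n - 1)"
  shows "(\<forall>p<n. \<forall>a<n. (\<Sum>q<n. z q a) + (mu - 1) * (\<Sum>q<p. z q a) = mu * y p a) \<longleftrightarrow>
    (\<forall>p<n. \<forall>a<n. mu * y p a = mu * t a - (mu - 1) * (\<Sum>k<n - p. U $$ (a, k) * t k)) \<and>
    (\<forall>a<n. (\<Sum>b<n. L $$ (a, b) * t b) = mu * (t a - (\<Sum>b<n. U $$ (a, b) * t b)))"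
    (is "?system \<longleftrightarrow> ?closed \<and> ?bGS")
proof -
  let ?recursion = "\<forall>p a. Suc p < n \<longrightarrow> a < n \<longrightarrow>
    mu * (y (Suc p) a - y p a) = (mu - 1) * (U $$ (a, n - 1 - p) * y p (n - 1 - p))"
  let ?first = "\<forall>a<n. (\<Sum>q<n. z q a) = mu * y 0 a"
  have telescoping: "(\<forall>p<n. (\<Sum>q<n. z q a) + (mu - 1) * (\<Sum>q<p. z q a) = mu * y p a) \<longleftrightarrow>
      (\<Sum>q<n. z q a) = mu * y 0 a \<and> (\<forall>p. Suc p < n \<longrightarrow> mu * (y (Suc p) a - y p a) = (mu - 1) * z p a)"
    for a
    by (rule telescoping_system_iff[OF n])
  have z_column: "z p a = U $$ (a, n - 1 - p) * y p (n - 1 - p)" if "Suc p < n" "a < n" for p a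
    using futc_splitting_nth_mult_sum[OF U _ that(2), of p] that unfolding z_def by simp
  have "?system \<longleftrightarrow> (\<forall>a<n. \<forall>p<n. (\<Sum>q<n. z q a) + (mu - 1) * (\<Sum>q<p. z q a) = mu * y p a)"
    by blast
  also have "\<dots> \<longleftrightarrow> (\<forall>a<n. (\<Sum>q<n. z q a) = mu * y 0 a \<and>
      (\<forall>p. Suc p < n \<longrightarrow> mu * (y (Suc p) a - y p a) = (mu - 1) * z p a))"
    by (simp only: telescoping)
  also have "\<dots> \<longleftrightarrow> ?first \<and> ?recursion"
    using z_column by auto
  finally have system: "?system \<longleftrightarrow> ?first \<and> ?recursion" .
  have recursion: "?recursion \<longleftrightarrow> ?closed"
    using futc_recursion_imp_closed_form[OF U mu] futc_closed_form_imp_recursion[OF U mu]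
    unfolding t_def by blast
  have first: "?closed \<Longrightarrow> ?first \<longleftrightarrow> ?bGS"
    using futc_first_block_row_iff[OF U n mu] unfolding z_def t_def by blast
  have "\<And>S F R C B. (S \<longleftrightarrow> F \<and> R) \<Longrightarrow> (R \<longleftrightarrow> C) \<Longrightarrow> (C \<Longrightarrow> F \<longleftrightarrow> B) \<Longrightarrow> S \<longleftrightarrow> C \<and> B"
    by blast
  from this[OF system recursion first] show ?thesis .
qed

lemma mult_mat_vec_eq_smult_one_minus_iff:
  fixes L U :: "'a::comm_ring_1 mat"
  assumes L: "L \<in> carrier_mat n n" and U: "U \<in> carrier_mat n n" and w: "w \<in> carrier_vec n"
  shows "L *\<^sub>v w = mu \<cdot>\<^sub>v ((1\<^sub>m n - U) *\<^sub>v w) \<longleftrightarrow>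
    (\<forall>a<n. (\<Sum>b<n. L $$ (a, b) * w $ b) = mu * (w $ a - (\<Sum>b<n. U $$ (a, b) * w $ b)))"
proof -
  have "(1\<^sub>m n - U) *\<^sub>v w = w - U *\<^sub>v w"
    using minus_mult_distrib_mat_vec[OF one_carrier_mat U w] w by simp
  moreover have "(M *\<^sub>v w) $ a = (\<Sum>b<n. M $$ (a, b) * w $ b)"
    if "M \<in> carrier_mat n n" "a < n" for M :: "'a mat" and a
    using that w by (auto simp: scalar_prod_def lessThan_atLeast0 intro!: sum.cong)
  ultimately show ?thesis
    using L U w by (auto simp: vec_eq_iff)
qed

lemma futc_eigen_equation_iff:
  fixes L U :: "'a::field mat"
  assumes L: "L \<in> carrier_mat n n" and U: "strictly_upper n U" and n: "0 < n" and mu: "mu \<noteq> 0"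
    and v: "v \<in> carrier_vec (n * n)"
  defines "Bs \<equiv> futc_splitting n L U" and "y \<equiv> \<lambda>q b. v $ (q * n + b)"
  shows "calU n Bs *\<^sub>v v = mu \<cdot>\<^sub>v ((1\<^sub>m (n * n) - calL n Bs) *\<^sub>v v) \<longleftrightarrow>
    (\<forall>p<n. \<forall>a<n. mu * y p a = mu * y (n - 1) a - (mu - 1) * (\<Sum>k<n - p. U $$ (a, k) * y (n - 1) k)) \<and>
    L *\<^sub>v vec n (y (n - 1)) = mu \<cdot>\<^sub>v ((1\<^sub>m n - U) *\<^sub>v vec n (y (n - 1)))"
proof -
  have len: "length Bs = n" unfolding Bs_def using n by (rule length_futc_splitting)
  have U': "U \<in> carrier_mat n n" using U unfolding strictly_upper_def by simp
  have sums: "(\<Sum>b<n. M $$ (a, b) * vec n (y (n - 1)) $ b) = (\<Sum>b<n. M $$ (a, b) * y (n - 1) b)"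
    for M :: "'a mat" and a by (intro sum.cong) auto
  show ?thesis
    unfolding iter_mat_eigen_equation_iff[of v Bs n mu, unfolded len, OF v]
      mult_mat_vec_eq_smult_one_minus_iff[OF L U' vec_carrier]
    using futc_eigen_system_iff[OF U n mu, of L y] unfolding Bs_def y_def sums
    by simp
qed

lemma futc_eigenvector_last_block:
  fixes L U :: "'a::field mat"
  assumes L: "L \<in> carrier_mat n n" and U: "strictly_upper n U" and n: "0 < n" and mu: "mu \<noteq> 0"
    and v: "v \<in> carrier_vec (n * n)" "v \<noteq> 0\<^sub>v (n * n)"
    and eq: "calU n (futc_splitting n L U) *\<^sub>v v
      = mu \<cdot>\<^sub>v ((1\<^sub>m (n * n) - calL n (futc_splitting n L U)) *\<^sub>v v)"
  defines "w \<equiv> vec n (\<lambda>b. v $ ((n - 1) * n + b))"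
  shows "w \<noteq> 0\<^sub>v n" and "L *\<^sub>v w = mu \<cdot>\<^sub>v ((1\<^sub>m n - U) *\<^sub>v w)"
proof -
  note system = eq[unfolded futc_eigen_equation_iff[OF L U n mu v(1)], folded w_def]
  show "w \<noteq> 0\<^sub>v n"
  proof
    assume "w = 0\<^sub>v n"
    then have "v $ ((n - 1) * n + b) = 0" if "b < n" for b
      using that unfolding w_def by (metis index_vec index_zero_vec(1))
    then have "v $ (p * n + a) = 0" if "p < n" "a < n" for p a
      using system mu that by simp
    then show False using v block_vec_eq_iff[of v n n "0\<^sub>v (n * n)"] block_index_less by simp
  qed
  show "L *\<^sub>v w = mu \<cdot>\<^sub>v ((1\<^sub>m n - U) *\<^sub>v w)"
    using system unfolding w_def by simp
qed

lemma bGS_eigenvector_lift: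
  fixes L U :: "'a::field mat"
  assumes L: "L \<in> carrier_mat n n" and U: "strictly_upper n U" and n: "0 < n" and mu: "mu \<noteq> 0"
    and w: "w \<in> carrier_vec n" "w \<noteq> 0\<^sub>v n" and eq: "L *\<^sub>v w = mu \<cdot>\<^sub>v ((1\<^sub>m n - U) *\<^sub>v w)"
  shows "\<exists>v \<in> carrier_vec (n * n). v \<noteq> 0\<^sub>v (n * n) \<and>
    calU n (futc_splitting n L U) *\<^sub>v v = mu \<cdot>\<^sub>v ((1\<^sub>m (n * n) - calL n (futc_splitting n L U)) *\<^sub>v v)"
proof -
  define y where "y p a = w $ a - (mu - 1) / mu * (\<Sum>k<n - p. U $$ (a, k) * w $ k)" for p a
  define v where "v = vec (n * n) (\<lambda>i. y (i div n) (i mod n))"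
  have v: "v \<in> carrier_vec (n * n)" unfolding v_def by simp
  have v_block: "v $ (p * n + a) = y p a" if "p < n" "a < n" for p a
    using that block_index_less[OF that] unfolding v_def by simp
  have last_block: "v $ ((n - 1) * n + a) = w $ a" if "a < n" for a
    using v_block[of "n - 1" a] that n U unfolding y_def strictly_upper_def by simp
  have "vec n (\<lambda>a. v $ ((n - 1) * n + a)) = w"
    using w last_block by auto
  moreover have "mu * v $ (p * n + a) = mu * w $ a - (mu - 1) * (\<Sum>k<n - p. U $$ (a, k) * w $ k)"
    if "p < n" "a < n" for p a
    using v_block[OF that] mu unfolding y_def by (simp add: field_simps)
  ultimately have "calU n (futc_splitting n L U) *\<^sub>v v
      = mu \<cdot>\<^sub>v ((1\<^sub>m (n * n) - calL n (futc_splitting n L U)) *\<^sub>v v)"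
    unfolding futc_eigen_equation_iff[OF L U n mu v] using eq last_block by simp
  moreover have "v \<noteq> 0\<^sub>v (n * n)"
  proof
    assume "v = 0\<^sub>v (n * n)"
    then have "w $ a = 0" if "a < n" for a
      using that last_block[OF that] block_index_less[of "n - 1" n a n] n by simp
    then show False using w by (auto simp: vec_eq_iff)
  qed
  ultimately show ?thesis using v by blast
qed

lemma futc_generalized_eigenvector_iff:
  fixes L U :: "'a::field mat"
  assumes L: "L \<in> carrier_mat n n" and U: "strictly_upper n U" and n: "0 < n" and mu: "mu \<noteq> 0"
  defines "Bs \<equiv> futc_splitting n L U"
  shows "(\<exists>v \<in> carrier_vec (n * n). v \<noteq> 0\<^sub>v (n * n) \<and>
            calU n Bs *\<^sub>v v = mu \<cdot>\<^sub>v ((1\<^sub>m (n * n) - calL n Bs) *\<^sub>v v)) \<longleftrightarrow>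
         (\<exists>w \<in> carrier_vec n. w \<noteq> 0\<^sub>v n \<and> L *\<^sub>v w = mu \<cdot>\<^sub>v ((1\<^sub>m n - U) *\<^sub>v w))"
proof
  assume "\<exists>v \<in> carrier_vec (n * n). v \<noteq> 0\<^sub>v (n * n) \<and>
    calU n Bs *\<^sub>v v = mu \<cdot>\<^sub>v ((1\<^sub>m (n * n) - calL n Bs) *\<^sub>v v)"
  then obtain v where "v \<in> carrier_vec (n * n)" "v \<noteq> 0\<^sub>v (n * n)"
    "calU n Bs *\<^sub>v v = mu \<cdot>\<^sub>v ((1\<^sub>m (n * n) - calL n Bs) *\<^sub>v v)" by blast
  from futc_eigenvector_last_block[OF L U n mu this[unfolded Bs_def]]
  show "\<exists>w \<in> carrier_vec n. w \<noteq> 0\<^sub>v n \<and> L *\<^sub>v w = mu \<cdot>\<^sub>v ((1\<^sub>m n - U) *\<^sub>v w)"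
    by (intro bexI[OF _ vec_carrier]) simp
next
  assume "\<exists>w \<in> carrier_vec n. w \<noteq> 0\<^sub>v n \<and> L *\<^sub>v w = mu \<cdot>\<^sub>v ((1\<^sub>m n - U) *\<^sub>v w)"
  then obtain w where "w \<in> carrier_vec n" "w \<noteq> 0\<^sub>v n" "L *\<^sub>v w = mu \<cdot>\<^sub>v ((1\<^sub>m n - U) *\<^sub>v w)"
    by blast
  from bGS_eigenvector_lift[OF L U n mu this]
  show "\<exists>v \<in> carrier_vec (n * n). v \<noteq> 0\<^sub>v (n * n) \<and>
      calU n Bs *\<^sub>v v = mu \<cdot>\<^sub>v ((1\<^sub>m (n * n) - calL n Bs) *\<^sub>v v)"
    unfolding Bs_def .
qed

theorem eigenvalue_iter_mat_futc_iff:
  fixes L U :: "'a::field mat"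
  assumes L: "L \<in> carrier_mat n n" and U: "strictly_upper n U" and n: "0 < n" and mu: "mu \<noteq> 0"
  shows "eigenvalue (iter_mat n (futc_splitting n L U)) mu \<longleftrightarrow> eigenvalue (bGS n L U) mu"
proof -
  define Bs where "Bs = futc_splitting n L U"
  have len: "length Bs = n" unfolding Bs_def using n by (rule length_futc_splitting)
  have A: "1\<^sub>m (n * n) - calL n Bs \<in> carrier_mat (n * n) (n * n)"
    by (rule minus_carrier_mat) (simp add: calL_def block_mat_def len)
  have det_A: "det (1\<^sub>m (n * n) - calL n Bs) \<noteq> 0"
    using det_one_minus_strictly_lower[OF strictly_lower_calL[of Bs n]] len by simp
  have calU: "calU n Bs \<in> carrier_mat (n * n) (n * n)"
    by (simp add: calU_def block_mat_def len)
  have U': "U \<in> carrier_mat n n" using U by (simp add: strictly_upper_def)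
  have A': "1\<^sub>m n - U \<in> carrier_mat n n" using U' by (rule minus_carrier_mat)
  have det_A': "det (1\<^sub>m n - U) \<noteq> 0" using det_one_minus_strictly_upper[OF U] by simp
  have "eigenvalue (iter_mat n Bs) mu \<longleftrightarrow>
      (\<exists>v \<in> carrier_vec (n * n). v \<noteq> 0\<^sub>v (n * n) \<and>
         calU n Bs *\<^sub>v v = mu \<cdot>\<^sub>v ((1\<^sub>m (n * n) - calL n Bs) *\<^sub>v v))"
    unfolding iter_mat_def len by (rule eigenvalue_mat_inv_mult_iff[OF A det_A calU])
  also have "\<dots> \<longleftrightarrow> (\<exists>w \<in> carrier_vec n. w \<noteq> 0\<^sub>v n \<and> L *\<^sub>v w = mu \<cdot>\<^sub>v ((1\<^sub>m n - U) *\<^sub>v w))"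
    unfolding Bs_def by (rule futc_generalized_eigenvector_iff[OF L U n mu])
  also have "\<dots> \<longleftrightarrow> eigenvalue (bGS n L U) mu"
    unfolding bGS_def by (rule eigenvalue_mat_inv_mult_iff[OF A' det_A' L, symmetric])
  finally show ?thesis unfolding Bs_def .
qed

context field_hom
begin

lemma mat_hom_mat_inv:
  assumes A: "A \<in> carrier_mat m m" and det: "det A \<noteq> 0"
  shows "mat\<^sub>h (mat_inv A) = mat_inv (mat\<^sub>h A)"
proof -
  note Ai = mat_inv_inverse[OF A det]
  have "mat\<^sub>h A * mat\<^sub>h (mat_inv A) = 1\<^sub>m m"
    using mat_hom_mult[OF A Ai(1)] Ai(2) mat_hom_one by simp
  moreover have "mat\<^sub>h (mat_inv A) * mat\<^sub>h A = 1\<^sub>m m"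
    using mat_hom_mult[OF Ai(1) A] Ai(3) mat_hom_one by simp
  ultimately show ?thesis
    using A Ai(1) by (intro mat_inv_eqI[symmetric]) auto
qed

lemma mat_hom_one_minus: "M \<in> carrier_mat m m \<Longrightarrow> mat\<^sub>h (1\<^sub>m m - M) = 1\<^sub>m m - mat\<^sub>h M"
  by (rule eq_matI) (auto simp: hom_minus hom_uminus)

lemma mat_hom_calL:
  assumes Bs: "\<forall>B \<in> set Bs. B \<in> carrier_mat n n"
  shows "mat\<^sub>h (calL n Bs) = calL n (map mat\<^sub>h Bs)"
proof (rule eq_matI)
  fix i j assume "i < dim_row (calL n (map mat\<^sub>h Bs))" "j < dim_col (calL n (map mat\<^sub>h Bs))"
  then have "i < length Bs * n" "j < length Bs * n" by (simp_all add: calL_def block_mat_def)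
  then have "j div n < length Bs" "i mod n < n" "j mod n < n"
    using block_index_div_mod by blast+
  moreover from this(1) have "Bs ! (j div n) \<in> carrier_mat n n" using Bs by simp
  ultimately show "mat\<^sub>h (calL n Bs) $$ (i, j) = calL n (map mat\<^sub>h Bs) $$ (i, j)"
    using \<open>i < length Bs * n\<close> \<open>j < length Bs * n\<close> by (simp add: calL_def block_mat_def)
qed (simp_all add: calL_def block_mat_def)

lemma mat_hom_calU:
  assumes Bs: "\<forall>B \<in> set Bs. B \<in> carrier_mat n n"
  shows "mat\<^sub>h (calU n Bs) = calU n (map mat\<^sub>h Bs)"
proof (rule eq_matI)
  fix i j assume "i < dim_row (calU n (map mat\<^sub>h Bs))" "j < dim_col (calU n (map mat\<^sub>h Bs))"
  then have "i < length Bs * n" "j < length Bs * n" by (simp_all add: calU_def block_mat_def)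
  then have "j div n < length Bs" "i mod n < n" "j mod n < n"
    using block_index_div_mod by blast+
  moreover from this(1) have "Bs ! (j div n) \<in> carrier_mat n n" using Bs by simp
  ultimately show "mat\<^sub>h (calU n Bs) $$ (i, j) = calU n (map mat\<^sub>h Bs) $$ (i, j)"
    using \<open>i < length Bs * n\<close> \<open>j < length Bs * n\<close> by (simp add: calU_def block_mat_def)
qed (simp_all add: calU_def block_mat_def)

lemma mat_hom_iter_mat:
  assumes Bs: "\<forall>B \<in> set Bs. B \<in> carrier_mat n n"
  shows "mat\<^sub>h (iter_mat n Bs) = iter_mat n (map mat\<^sub>h Bs)"
proof -
  let ?N = "length Bs * n"
  have calL: "calL n Bs \<in> carrier_mat ?N ?N" and calU: "calU n Bs \<in> carrier_mat ?N ?N"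
    by (simp_all add: calL_def calU_def block_mat_def)
  have A: "1\<^sub>m ?N - calL n Bs \<in> carrier_mat ?N ?N" using calL by (rule minus_carrier_mat)
  have det: "det (1\<^sub>m ?N - calL n Bs) \<noteq> 0"
    using det_one_minus_strictly_lower[OF strictly_lower_calL[of Bs n]] by simp
  have "mat\<^sub>h (iter_mat n Bs) = mat\<^sub>h (mat_inv (1\<^sub>m ?N - calL n Bs)) * mat\<^sub>h (calU n Bs)"
    unfolding iter_mat_def by (rule mat_hom_mult[OF mat_inv_inverse(1)[OF A det] calU])
  also have "\<dots> = mat_inv (1\<^sub>m ?N - calL n (map mat\<^sub>h Bs)) * calU n (map mat\<^sub>h Bs)"
    by (simp add: mat_hom_mat_inv[OF A det] mat_hom_one_minus[OF calL] mat_hom_calL[OF Bs]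
        mat_hom_calU[OF Bs])
  finally show ?thesis by (simp add: iter_mat_def)
qed

lemma mat_hom_futc_splitting:
  assumes U: "U \<in> carrier_mat n n"
  shows "map mat\<^sub>h (futc_splitting n L U) = futc_splitting n (mat\<^sub>h L) (mat\<^sub>h U)"
proof -
  have "mat\<^sub>h (col_part n U j) = col_part n (mat\<^sub>h U) j" for j
    using U by (intro eq_matI) (auto simp: col_part_def)
  then show ?thesis by (simp add: futc_splitting_def)
qed

lemma mat_hom_bGS:
  assumes L: "L \<in> carrier_mat n n" and U: "strictly_upper n U"
  shows "mat\<^sub>h (bGS n L U) = bGS n (mat\<^sub>h L) (mat\<^sub>h U)"
proof -
  have U': "U \<in> carrier_mat n n" using U by (simp add: strictly_upper_def)
  have A: "1\<^sub>m n - U \<in> carrier_mat n n" using U' by (rule minus_carrier_mat)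
  have det: "det (1\<^sub>m n - U) \<noteq> 0" using det_one_minus_strictly_upper[OF U] by simp
  show ?thesis
    unfolding bGS_def mat_hom_mult[OF mat_inv_inverse(1)[OF A det] L]
    by (simp add: mat_hom_mat_inv[OF A det] mat_hom_one_minus[OF U'])
qed

end

theorem theorem6p1:
  fixes n :: nat and L U :: "real mat"
  assumes "strictly_lower n L"
    and "strictly_upper n U"
    and "L \<noteq> 0\<^sub>m n n"
    and "\<forall>j\<in>{2..n}. col_part n U j \<noteq> 0\<^sub>m n n"
  shows "\<forall>mu::complex. mu \<noteq> 0 \<longrightarrow>
    (eigenvalue (map_mat complex_of_real (iter_mat n (futc_splitting n L U))) mu
     \<longleftrightarrow> eigenvalue (map_mat complex_of_real (bGS n L U)) mu)"
proof (intro allI impI)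
  fix mu :: complex assume mu: "mu \<noteq> 0"
  have L: "L \<in> carrier_mat n n" and U: "U \<in> carrier_mat n n"
    using assms(1,2) by (simp_all add: strictly_lower_def strictly_upper_def)
  have n: "0 < n"
    using L assms(3) by (cases n) auto
  have "strictly_upper n (map_mat complex_of_real U)"
    using assms(2) by (auto simp: strictly_upper_def)
  with L n mu show "eigenvalue (map_mat complex_of_real (iter_mat n (futc_splitting n L U))) mu
      \<longleftrightarrow> eigenvalue (map_mat complex_of_real (bGS n L U)) mu"
    unfolding of_real_hom.mat_hom_iter_mat[OF futc_splitting_carrier[OF L]]
      of_real_hom.mat_hom_futc_splitting[OF U] of_real_hom.mat_hom_bGS[OF L assms(2)]
    by (intro eigenvalue_iter_mat_futc_iff) simp_all
qed

end
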